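(* Suppose Assumptions 1, 2 and 3 hold and $\delta_{2r}=c_0/\sqrt r$ for a sufficiently small constant $c_0$. Let $U^{(\lambda)}$ be a point satisfying the first- and second-order necessary conditions for a local minimum of $f^{(\lambda)}$. Then on the event $\mathcal{E}_{\mathsf{Good}}$, \[ \frac{1}{\sqrt{dr}}\|U^{(\lambda)}U^{(\lambda)\top}-M\|_F\le C\sigma \] for a constant $C$ depending on the assumptions. In particular, $\|U^{(\lambda)}U^{(\lambda)\top}-M\|_F<\lambda/(2\delta_{2r})$.
   Context: Setting. Let $d,n,r$ be positive integers and $\sigma>0$. $\mathsf{GOE}(d)$ denotes the law of a symmetric $d\times d$ matrix whose diagonal entries are i.i.d. $N(0,1)$ and whose entries above the diagonal are i.i.d. $N(0,1/2)$, independent of the diagonal. One observes $(y_i,X_i)$, $i=1,\dots,n$, with $y_i=n^{-1/2}\langle X_i,M\rangle+\varepsilon_i$, where $\langle\cdot,\cdot\rangle$ is the Frobenius inner product, $X_i\sim\mathsf{GOE}(d)$, $\varepsilon_i\sim N(0,\sigma^2)$, all mutually independent, and $M$ is a symmetric positive semidefinite matrix of rank $r$. Define $\mathcal{X}(A)_i=n^{-1/2}\langle X_i,A\rangle$. For $U\in\mathbb{R}^{d\times r}$, $f^{(\lambda)}(U)=\frac14\sum_{i=1}^n(y_i-n^{-1/2}\langle X_i,UU^\top\rangle)^2+\frac{\lambda}{2}\|U\|_F^2$. Assumption 1: $M=\sqrt d\,V\Lambda V^\top$ with $V\in\mathbb{R}^{d\times r}$ having orthonormal columns and $\Lambda$ an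 $r\times r$ positive diagonal matrix whose smallest entry $\lambda_r$ satisfies $C_1\sqrt r<\lambda_r/\sigma<C_2\sqrt r$ for sufficiently large constants $C_1,C_2$; moreover $\|M\|/(\lambda_r\sqrt d)\le\kappa$ with $\kappa=O(1)$, and $\sigma\ge\sigma_{\min}>c>0$. Assumption 2: $\gamma_n:=n/(dr)$ satisfies $\gamma_n\ge C_3 r$ for a sufficiently large constant $C_3$. Assumption 3: $C_4\sqrt d\le\lambda/\sigma\le C_5\sqrt d$ for constants $C_4,C_5$. For a fixed constant $\delta_{2r}>0$, $\mathcal{E}_{\mathsf{Good}}$ is the intersection of the events: (i) $\|\frac1n\sum_i\varepsilon_iX_i\|\le 8\sigma\sqrt{d/n}$ (spectral norm); (ii) $(1-\delta_{2r})\|A\|_F^2\le\|\mathcal{X}(A)\|^2\le(1+\delta_{2r})\|A\|_F^2$ for all symmetric $A$ of rank at most $2r$; (iii) $|\frac1n\sum_i\varepsilon_i\langle X_i,A\rangle|\le C\sigma\sqrt{dr/n}\,\|A\|_F$ for all symmetric $A$ of rank at most $2r$. *)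

theory Defs
  imports Complex_Main "Jordan_Normal_Form.DL_Rank"
begin

definition frob_inner :: "real mat \<Rightarrow> real mat \<Rightarrow> real" where
  "frob_inner A B = (\<Sum>i<dim_row A. \<Sum>j<dim_col A. A $$ (i,j) * B $$ (i,j))"

definition frob_norm :: "real mat \<Rightarrow> real" where
  "frob_norm A = sqrt (frob_inner A A)"

definition vnorm :: "real vec \<Rightarrow> real" where
  "vnorm v = sqrt (v \<bullet> v)"

definition spec_norm :: "real mat \<Rightarrow> real" where
  "spec_norm A = Sup {vnorm (A *\<^sub>v v) | v. v \<in> carrier_vec (dim_col A) \<and> vnorm v = 1}"

definition symmetric_mat :: "real mat \<Rightarrow> bool" where
  "symmetric_mat A \<longleftrightarrow> dim_row A = dim_col A \<and> transpose_mat A = A"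

definition mat_rank :: "real mat \<Rightarrow> nat" where
  "mat_rank A = vec_space.rank (dim_row A) A"

definition meas :: "nat \<Rightarrow> (nat \<Rightarrow> real mat) \<Rightarrow> real mat \<Rightarrow> nat \<Rightarrow> real" where
  "meas n X A i = frob_inner (X i) A / sqrt (real n)"

definition meas_sqnorm :: "nat \<Rightarrow> (nat \<Rightarrow> real mat) \<Rightarrow> real mat \<Rightarrow> real" where
  "meas_sqnorm n X A = (\<Sum>i<n. (meas n X A i)\<^sup>2)"

definition obs :: "nat \<Rightarrow> (nat \<Rightarrow> real mat) \<Rightarrow> (nat \<Rightarrow> real) \<Rightarrow> real mat \<Rightarrow> nat \<Rightarrow> real" where
  "obs n X eps M i = meas n X M i + eps i"

definition f_obj :: "nat \<Rightarrow> (nat \<Rightarrow> real mat) \<Rightarrow> (nat \<Rightarrow> real) \<Rightarrow> real mat \<Rightarrow> real \<Rightarrow> real mat \<Rightarrow> real" where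
  "f_obj n X eps M lam U =
     (1/4) * (\<Sum>i<n. (obs n X eps M i - meas n X (U * transpose_mat U) i)\<^sup>2)
     + (lam / 2) * (frob_norm U)\<^sup>2"

(* First- and second-order necessary conditions for a local minimum of F at U, over d x r
   matrices: every directional derivative vanishes (gradient zero) and every second
   directional derivative is nonnegative (Hessian PSD). *)
definition second_order_stationary :: "(real mat \<Rightarrow> real) \<Rightarrow> nat \<Rightarrow> nat \<Rightarrow> real mat \<Rightarrow> bool" where
  "second_order_stationary F d r U \<longleftrightarrow> U \<in> carrier_mat d r \<and>
     (\<forall>H \<in> carrier_mat d r. \<exists>g'.
        (\<forall>t. ((\<lambda>s. F (U + s \<cdot>\<^sub>m H)) has_real_derivative g' t) (at t)) \<and>
        g' 0 = 0 \<and>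
        (\<exists>D. (g' has_real_derivative D) (at 0) \<and> D \<ge> 0))"

definition good_event :: "nat \<Rightarrow> nat \<Rightarrow> nat \<Rightarrow> real \<Rightarrow> real \<Rightarrow> real \<Rightarrow>
    (nat \<Rightarrow> real mat) \<Rightarrow> (nat \<Rightarrow> real) \<Rightarrow> bool" where
  "good_event d n r sigma delta Cev X eps \<longleftrightarrow>
     spec_norm (mat d d (\<lambda>(j,k). (1 / real n) * (\<Sum>i<n. eps i * X i $$ (j,k))))
        \<le> 8 * sigma * sqrt (real d / real n) \<and>
     (\<forall>A \<in> carrier_mat d d. symmetric_mat A \<and> mat_rank A \<le> 2 * r \<longrightarrow>
        (1 - delta) * (frob_norm A)\<^sup>2 \<le> meas_sqnorm n X A \<and>
        meas_sqnorm n X A \<le> (1 + delta) * (frob_norm A)\<^sup>2) \<and>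
     (\<forall>A \<in> carrier_mat d d. symmetric_mat A \<and> mat_rank A \<le> 2 * r \<longrightarrow>
        \<bar>(1 / real n) * (\<Sum>i<n. eps i * frob_inner (X i) A)\<bar>
          \<le> Cev * sigma * sqrt (real d * real r / real n) * frob_norm A)"

end

theory Submission
  imports Defs "HOL-Analysis.Function_Topology"
begin

(* Let Y be a factor of M = Y Y^T that is best aligned with U, i.e. maximises <U, Y> over all
   factors; it exists by compactness. Maximality against the orthogonal transformations Y G
   (products of Householder reflections) forces U^T Y to be symmetric positive semidefinite.
   For such an aligned pair, D = U - Y satisfies ||D D^T||^2 <= 2 ||U U^T - M||^2, and the
   first- and second-order conditions tested in the direction D, combined with the restricted
   isometry property and the noise bound of the good event on the rank-2r matrices
   U U^T - M and D D^T, give (1 - 5 delta) ||U U^T - M||^2 <= (noise + lambda sqrt r) ||U U^T - M||.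
   With lambda of order sigma sqrt d this is ||U U^T - M|| = O(sigma sqrt (d r)). *)

lemma index_mult_mat_sum:
  "A \<in> carrier_mat n k \<Longrightarrow> B \<in> carrier_mat k m \<Longrightarrow> i < n \<Longrightarrow> j < m \<Longrightarrow>
   (A * B) $$ (i,j) = (\<Sum>l<k. A $$ (i,l) * B $$ (l,j))"
  by (simp add: scalar_prod_def atLeast0LessThan)

lemma index_mult_transpose_sum:
  "A \<in> carrier_mat d r \<Longrightarrow> B \<in> carrier_mat d r \<Longrightarrow> i < d \<Longrightarrow> j < d \<Longrightarrow>
   (A * transpose_mat B) $$ (i,j) = (\<Sum>k<r. A $$ (i,k) * B $$ (j,k))"
  by (subst index_mult_mat_sum[of _ d r _ d]) auto

lemma frob_inner_carrier:
  "A \<in> carrier_mat m k \<Longrightarrow> frob_inner A B = (\<Sum>i<m. \<Sum>j<k. A $$ (i,j) * B $$ (i,j))"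
  by (simp add: frob_inner_def)

lemma frob_inner_self_nonneg: "frob_inner A A \<ge> 0"
  unfolding frob_inner_def by (intro sum_nonneg) auto

lemma frob_norm_square: "(frob_norm A)\<^sup>2 = frob_inner A A"
  unfolding frob_norm_def using frob_inner_self_nonneg by simp

lemma frob_inner_lincomb_right:
  assumes "A \<in> carrier_mat m k"
    and "\<And>i j. i < m \<Longrightarrow> j < k \<Longrightarrow> Z $$ (i,j) = a * Z1 $$ (i,j) + b * Z2 $$ (i,j) + c * Z3 $$ (i,j)"
  shows "frob_inner A Z = a * frob_inner A Z1 + b * frob_inner A Z2 + c * frob_inner A Z3"
proof -
  have "frob_inner A Z = (\<Sum>i<m. \<Sum>j<k. a * (A $$ (i,j) * Z1 $$ (i,j)) + b * (A $$ (i,j) * Z2 $$ (i,j))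
          + c * (A $$ (i,j) * Z3 $$ (i,j)))"
    unfolding frob_inner_carrier[OF assms(1)]
    by (intro sum.cong refl) (simp add: assms(2) algebra_simps)
  then show ?thesis
    unfolding frob_inner_carrier[OF assms(1)] by (simp add: sum.distrib sum_distrib_left)
qed

lemma frob_inner_diff_self:
  fixes X Z :: "real mat"
  assumes X: "X \<in> carrier_mat m k" and Z: "Z \<in> carrier_mat m k"
  shows "frob_inner (X - Z) (X - Z) = frob_inner X X - 2 * frob_inner X Z + frob_inner Z Z"
proof -
  have XZ: "X - Z \<in> carrier_mat m k" using X Z by auto
  have "frob_inner (X - Z) (X - Z)
      = (\<Sum>i<m. \<Sum>j<k. X $$ (i,j) * X $$ (i,j) - 2 * (X $$ (i,j) * Z $$ (i,j)) + Z $$ (i,j) * Z $$ (i,j))"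
    unfolding frob_inner_carrier[OF XZ] using X Z by (intro sum.cong refl) (auto simp: algebra_simps)
  then show ?thesis
    unfolding frob_inner_carrier[OF X] frob_inner_carrier[OF Z]
    by (simp add: sum.distrib sum_subtractf sum_distrib_left)
qed

lemma sum_swap_inner_outer:
  fixes F :: "nat \<Rightarrow> nat \<Rightarrow> nat \<Rightarrow> nat \<Rightarrow> real"
  shows "(\<Sum>i<d. \<Sum>j<d. \<Sum>a<r. \<Sum>b<r. F i j a b) = (\<Sum>a<r. \<Sum>b<r. \<Sum>i<d. \<Sum>j<d. F i j a b)"
proof -
  have "(\<Sum>i<d. \<Sum>j<d. \<Sum>a<r. \<Sum>b<r. F i j a b) = (\<Sum>i<d. \<Sum>a<r. \<Sum>j<d. \<Sum>b<r. F i j a b)"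
    by (intro sum.cong refl sum.swap)
  also have "\<dots> = (\<Sum>a<r. \<Sum>i<d. \<Sum>j<d. \<Sum>b<r. F i j a b)" by (rule sum.swap)
  also have "\<dots> = (\<Sum>a<r. \<Sum>i<d. \<Sum>b<r. \<Sum>j<d. F i j a b)"
    by (intro sum.cong refl sum.swap)
  also have "\<dots> = (\<Sum>a<r. \<Sum>b<r. \<Sum>i<d. \<Sum>j<d. F i j a b)"
    by (intro sum.cong refl sum.swap)
  finally show ?thesis .
qed

lemma frob_inner_gram:
  fixes X1 X2 X3 X4 :: "real mat"
  assumes X: "X1 \<in> carrier_mat d r" "X2 \<in> carrier_mat d r" "X3 \<in> carrier_mat d r" "X4 \<in> carrier_mat d r"
  shows "frob_inner (X1 * transpose_mat X2) (X3 * transpose_mat X4)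
    = (\<Sum>a<r. \<Sum>b<r. (\<Sum>i<d. X1 $$ (i,a) * X3 $$ (i,b)) * (\<Sum>j<d. X2 $$ (j,a) * X4 $$ (j,b)))"
proof -
  have c: "X1 * transpose_mat X2 \<in> carrier_mat d d" using X by auto
  have "frob_inner (X1 * transpose_mat X2) (X3 * transpose_mat X4)
    = (\<Sum>i<d. \<Sum>j<d. (\<Sum>a<r. X1 $$ (i,a) * X2 $$ (j,a)) * (\<Sum>b<r. X3 $$ (i,b) * X4 $$ (j,b)))"
    unfolding frob_inner_carrier[OF c]
    by (intro sum.cong refl) (simp add: index_mult_transpose_sum[OF X(1,2)] index_mult_transpose_sum[OF X(3,4)])
  also have "\<dots> = (\<Sum>i<d. \<Sum>j<d. \<Sum>a<r. \<Sum>b<r. X1 $$ (i,a) * X3 $$ (i,b) * (X2 $$ (j,a) * X4 $$ (j,b)))"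
    by (simp add: sum_product algebra_simps)
  also have "\<dots> = (\<Sum>a<r. \<Sum>b<r. \<Sum>i<d. \<Sum>j<d. X1 $$ (i,a) * X3 $$ (i,b) * (X2 $$ (j,a) * X4 $$ (j,b)))"
    by (rule sum_swap_inner_outer)
  also have "\<dots> = (\<Sum>a<r. \<Sum>b<r. (\<Sum>i<d. X1 $$ (i,a) * X3 $$ (i,b)) * (\<Sum>j<d. X2 $$ (j,a) * X4 $$ (j,b)))"
    by (simp add: sum_product)
  finally show ?thesis .
qed

lemma gram_symmetric:
  fixes D :: "real mat"
  assumes D: "D \<in> carrier_mat d r"
  shows "symmetric_mat (D * transpose_mat D)"
  unfolding symmetric_mat_def
  by (rule conjI, use D in simp, rule eq_matI)
     (use D in \<open>auto simp: index_mult_transpose_sum[OF D D] mult.commute simp del: index_mult_mat(1)\<close>)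

lemma gram_diff_symmetric:
  fixes U Y :: "real mat"
  assumes U: "U \<in> carrier_mat d r" and Y: "Y \<in> carrier_mat d r"
  shows "symmetric_mat (U * transpose_mat U - Y * transpose_mat Y)"
  unfolding symmetric_mat_def
  by (rule conjI, use U Y in simp, rule eq_matI)
     (use U Y in \<open>auto simp: index_mult_transpose_sum[OF U U] index_mult_transpose_sum[OF Y Y] mult.commute
        simp del: index_mult_mat(1)\<close>)

lemma rank_sum_outer_products:
  fixes f g :: "nat \<Rightarrow> nat \<Rightarrow> real"
  shows "vec_space.rank n (mat n n (\<lambda>(i,j). \<Sum>k<m. f k i * g k j)) \<le> m"
proof (induction m)
  case 0
  have zero: "mat n n (\<lambda>(i,j). \<Sum>k<0. f k i * g k j) = (0\<^sub>m n n :: real mat)"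
    by (rule eq_matI) auto
  show ?case unfolding zero using vec_space.rank_0I[of n n] by simp
next
  case (Suc m)
  have split: "mat n n (\<lambda>(i,j). \<Sum>k<Suc m. f k i * g k j)
    = mat n n (\<lambda>(i,j). \<Sum>k<m. f k i * g k j) + mat n n (\<lambda>(i,j). f m i * g m j)"
    by (rule eq_matI) auto
  have "vec_space.rank n (mat n n (\<lambda>(i,j). \<Sum>k<Suc m. f k i * g k j))
     \<le> vec_space.rank n (mat n n (\<lambda>(i,j). \<Sum>k<m. f k i * g k j))
       + vec_space.rank n (mat n n (\<lambda>(i,j). f m i * g m j))"
    unfolding split by (rule vec_space.rank_subadditive) auto
  moreover have "vec_space.rank n (mat n n (\<lambda>(i,j). f m i * g m j)) \<le> 1"
    by (rule vec_space.rank_le_1_product_entries[of _ n n "f m" "g m"]) auto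
  ultimately show ?case using Suc.IH by simp
qed

lemma gram_rank:
  fixes D :: "real mat"
  assumes D: "D \<in> carrier_mat d r"
  shows "mat_rank (D * transpose_mat D) \<le> r"
proof -
  have "D * transpose_mat D = mat d d (\<lambda>(i,j). \<Sum>k<r. D $$ (i,k) * D $$ (j,k))"
    by (rule eq_matI) (use D in \<open>auto simp: index_mult_transpose_sum[OF D D] simp del: index_mult_mat(1)\<close>)
  then show ?thesis unfolding mat_rank_def
    using D rank_sum_outer_products[of d "\<lambda>k i. D $$ (i,k)" "\<lambda>k j. D $$ (j,k)" r] by simp
qed

lemma gram_diff_rank:
  fixes U Y :: "real mat"
  assumes U: "U \<in> carrier_mat d r" and Y: "Y \<in> carrier_mat d r"
  shows "mat_rank (U * transpose_mat U - Y * transpose_mat Y) \<le> 2 * r"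
proof -
  define A1 where "A1 = mat d d (\<lambda>(i,j). \<Sum>k<r. U $$ (i,k) * U $$ (j,k))"
  define A2 where "A2 = mat d d (\<lambda>(i,j). \<Sum>k<r. (- Y $$ (i,k)) * Y $$ (j,k))"
  have eq: "U * transpose_mat U - Y * transpose_mat Y = A1 + A2"
    by (rule eq_matI) (use U Y in \<open>auto simp: A1_def A2_def index_mult_transpose_sum[OF U U]
        index_mult_transpose_sum[OF Y Y] sum_negf simp del: index_mult_mat(1)\<close>)
  have "vec_space.rank d (A1 + A2) \<le> vec_space.rank d A1 + vec_space.rank d A2"
    by (rule vec_space.rank_subadditive) (auto simp: A1_def A2_def)
  moreover have "vec_space.rank d A1 \<le> r" "vec_space.rank d A2 \<le> r"
    unfolding A1_def A2_def by (rule rank_sum_outer_products)+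
  moreover have "dim_row (U * transpose_mat U - Y * transpose_mat Y) = d" using U Y by simp
  ultimately show ?thesis unfolding mat_rank_def eq by simp
qed

lemma gram_mult_orthogonal:
  fixes Y G :: "real mat"
  assumes Y: "Y \<in> carrier_mat d r" and G: "G \<in> carrier_mat r r" and GG: "G * transpose_mat G = 1\<^sub>m r"
  shows "(Y * G) * transpose_mat (Y * G) = Y * transpose_mat Y"
proof -
  have "(Y * G) * transpose_mat (Y * G) = (Y * G) * (transpose_mat G * transpose_mat Y)"
    using Y G by (simp add: transpose_mult)
  also have "\<dots> = Y * (G * transpose_mat G) * transpose_mat Y"
    using Y G by (simp add: assoc_mult_mat[of _ d r _ r _ d] assoc_mult_mat[of _ r r _ r _ d])
  finally show ?thesis using GG Y by simp
qed

section \<open>First- and second-order conditions along a line\<close>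

lemma quartic_path_stationary:
  fixes y al be ga :: "nat \<Rightarrow> real" and a b c lam D :: real and g' :: "real \<Rightarrow> real"
  assumes deriv: "\<And>t. ((\<lambda>s. (1/4) * (\<Sum>i<n. (y i - (al i + s * be i + s\<^sup>2 * ga i))\<^sup>2)
                            + lam/2 * (a + 2 * s * b + s\<^sup>2 * c)) has_real_derivative g' t) (at t)"
    and g'0: "g' 0 = 0" and D: "(g' has_real_derivative D) (at 0)" "D \<ge> 0"
  shows "(\<Sum>i<n. (y i - al i) * be i) = 2 * lam * b"
    and "(\<Sum>i<n. (be i)\<^sup>2) - 2 * (\<Sum>i<n. (y i - al i) * ga i) + 2 * lam * c \<ge> 0"
proof -
  define phi1 where "phi1 s = (1/4) * (\<Sum>i<n. 2 * (y i - (al i + s * be i + s\<^sup>2 * ga i)) * (- (be i + 2 * s * ga i)))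
      + lam/2 * (2 * b + 2 * s * c)" for s
  have "((\<lambda>s. (1/4) * (\<Sum>i<n. (y i - (al i + s * be i + s\<^sup>2 * ga i))\<^sup>2) + lam/2 * (a + 2 * s * b + s\<^sup>2 * c))
      has_real_derivative phi1 t) (at t)" for t
    unfolding phi1_def
    apply (rule derivative_eq_intros refl | simp)+
    by (simp add: algebra_simps)
  then have g': "g' = phi1" using DERIV_unique[OF deriv] by blast
  have "(phi1 has_real_derivative (1/4) * (\<Sum>i<n. 2 * (- (be i + 2 * 0 * ga i)) * (- (be i + 2 * 0 * ga i))
       + 2 * (y i - (al i + 0 * be i + 0\<^sup>2 * ga i)) * (- (2 * ga i))) + lam/2 * (2 * c)) (at 0)"
    unfolding phi1_def
    apply (rule derivative_eq_intros refl | simp)+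
    by (simp add: algebra_simps)
  then have "D = (1/4) * (\<Sum>i<n. 2 * (be i)\<^sup>2 - 4 * ((y i - al i) * ga i)) + lam * c"
    using DERIV_unique[OF D(1)[unfolded g']] by (simp add: power2_eq_square algebra_simps)
  then have "0 \<le> (1/4) * (2 * (\<Sum>i<n. (be i)\<^sup>2) - 4 * (\<Sum>i<n. (y i - al i) * ga i)) + lam * c"
    using D(2) by (simp add: sum_subtractf sum_distrib_left)
  then show "(\<Sum>i<n. (be i)\<^sup>2) - 2 * (\<Sum>i<n. (y i - al i) * ga i) + 2 * lam * c \<ge> 0"
    by (simp add: algebra_simps)
  have "phi1 0 = (1/4) * ((-2) * (\<Sum>i<n. (y i - al i) * be i)) + lam * b"
    unfolding phi1_def by (simp add: sum_distrib_left algebra_simps)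
  then show "(\<Sum>i<n. (y i - al i) * be i) = 2 * lam * b"
    using g'0 g' by simp
qed

lemma gram_along_line:
  fixes U H :: "real mat"
  assumes U: "U \<in> carrier_mat d r" and H: "H \<in> carrier_mat d r" and ij: "i < d" "j < d"
  shows "((U + s \<cdot>\<^sub>m H) * transpose_mat (U + s \<cdot>\<^sub>m H)) $$ (i,j) =
     1 * (U * transpose_mat U) $$ (i,j) + s * (U * transpose_mat H + H * transpose_mat U) $$ (i,j)
     + s\<^sup>2 * (H * transpose_mat H) $$ (i,j)"
proof -
  have UsH: "U + s \<cdot>\<^sub>m H \<in> carrier_mat d r" using U H by auto
  show ?thesis
    using U H ij
    by (simp add: index_mult_transpose_sum[OF UsH UsH ij] index_mult_transpose_sum[OF U U ij]
        index_mult_transpose_sum[OF U H ij] index_mult_transpose_sum[OF H U ij]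
        index_mult_transpose_sum[OF H H ij] sum.distrib sum_distrib_left algebra_simps power2_eq_square)
qed

lemma f_obj_along_line:
  fixes U H :: "real mat"
  assumes U: "U \<in> carrier_mat d r" and H: "H \<in> carrier_mat d r" and Xc: "\<forall>i<n. X i \<in> carrier_mat d d"
  shows "f_obj n X eps M lam (U + s \<cdot>\<^sub>m H) =
    (1/4) * (\<Sum>i<n. (obs n X eps M i - (meas n X (U * transpose_mat U) i
        + s * meas n X (U * transpose_mat H + H * transpose_mat U) i + s\<^sup>2 * meas n X (H * transpose_mat H) i))\<^sup>2)
    + lam/2 * (frob_inner U U + 2 * s * frob_inner U H + s\<^sup>2 * frob_inner H H)"
proof -
  have meas_line: "meas n X ((U + s \<cdot>\<^sub>m H) * transpose_mat (U + s \<cdot>\<^sub>m H)) i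
      = meas n X (U * transpose_mat U) i + s * meas n X (U * transpose_mat H + H * transpose_mat U) i
        + s\<^sup>2 * meas n X (H * transpose_mat H) i" if "i < n" for i
    using frob_inner_lincomb_right[of "X i" d d, OF _ gram_along_line[OF U H]] Xc that
    unfolding meas_def by (simp add: add_divide_distrib)
  have UsH: "U + s \<cdot>\<^sub>m H \<in> carrier_mat d r" using U H by auto
  have "frob_inner (U + s \<cdot>\<^sub>m H) (U + s \<cdot>\<^sub>m H) = (\<Sum>i<d. \<Sum>j<r. U $$ (i,j) * U $$ (i,j)
      + 2 * s * (U $$ (i,j) * H $$ (i,j)) + s\<^sup>2 * (H $$ (i,j) * H $$ (i,j)))"
    unfolding frob_inner_carrier[OF UsH] using U H
    by (intro sum.cong refl) (auto simp: algebra_simps power2_eq_square)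
  then have "(frob_norm (U + s \<cdot>\<^sub>m H))\<^sup>2 = frob_inner U U + 2 * s * frob_inner U H + s\<^sup>2 * frob_inner H H"
    unfolding frob_norm_square frob_inner_carrier[OF U] frob_inner_carrier[OF H]
    by (simp add: sum.distrib sum_distrib_left)
  then show ?thesis unfolding f_obj_def by (simp add: meas_line)
qed

lemma second_order_stationary_conditions:
  fixes U H :: "real mat"
  assumes sos: "second_order_stationary (f_obj n X eps M lam) d r U"
    and H: "H \<in> carrier_mat d r" and Xc: "\<forall>i<n. X i \<in> carrier_mat d d"
  shows "(\<Sum>i<n. (obs n X eps M i - meas n X (U * transpose_mat U) i)
            * meas n X (U * transpose_mat H + H * transpose_mat U) i) = 2 * lam * frob_inner U H"
    and "(\<Sum>i<n. (meas n X (U * transpose_mat H + H * transpose_mat U) i)\<^sup>2)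
          - 2 * (\<Sum>i<n. (obs n X eps M i - meas n X (U * transpose_mat U) i) * meas n X (H * transpose_mat H) i)
          + 2 * lam * frob_inner H H \<ge> 0"
proof -
  have U: "U \<in> carrier_mat d r" using sos unfolding second_order_stationary_def by auto
  obtain g' D where "\<And>t. ((\<lambda>s. f_obj n X eps M lam (U + s \<cdot>\<^sub>m H)) has_real_derivative g' t) (at t)"
    and "g' 0 = 0" "(g' has_real_derivative D) (at 0)" "D \<ge> 0"
    using sos H unfolding second_order_stationary_def by blast
  note conds = quartic_path_stationary[OF this[unfolded f_obj_along_line[OF U H Xc]]]
  show "(\<Sum>i<n. (obs n X eps M i - meas n X (U * transpose_mat U) i)
            * meas n X (U * transpose_mat H + H * transpose_mat U) i) = 2 * lam * frob_inner U H"
    by (rule conds(1))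
  show "(\<Sum>i<n. (meas n X (U * transpose_mat H + H * transpose_mat U) i)\<^sup>2)
          - 2 * (\<Sum>i<n. (obs n X eps M i - meas n X (U * transpose_mat U) i) * meas n X (H * transpose_mat H) i)
          + 2 * lam * frob_inner H H \<ge> 0"
    by (rule conds(2))
qed

section \<open>A factor of \<open>M\<close> best aligned with \<open>U\<close>\<close>

lemma compact_cube: "compact (PiE UNIV (\<lambda>_::nat\<times>nat. {-c..c::real}))"
proof -
  have "compactin (product_topology (\<lambda>_. euclidean) UNIV) (PiE UNIV (\<lambda>_::nat\<times>nat. {-c..c::real}))"
    by (subst compactin_PiE) auto
  then show ?thesis by (simp add: euclidean_product_topology)
qed

lemma closed_gram_equations:
  "closed {f :: nat\<times>nat \<Rightarrow> real. \<forall>i. \<forall>j. i < d \<longrightarrow> j < d \<longrightarrow> (\<Sum>k<r. f (i,k) * f (j,k)) = M $$ (i,j)}"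
proof (intro closed_Collect_all closed_Collect_imp open_Collect_const)
  fix i j
  show "closed {f :: nat\<times>nat \<Rightarrow> real. (\<Sum>k<r. f (i,k) * f (j,k)) = M $$ (i,j)}"
    by (intro closed_Collect_eq continuous_on_sum continuous_on_mult continuous_on_product_coordinates
        continuous_on_const)
qed

lemma gram_factor_entry_bound:
  fixes Y M :: "real mat"
  assumes Y: "Y \<in> carrier_mat d r" and YM: "Y * transpose_mat Y = M" and i: "i < d" and k: "k < r"
  shows "\<bar>Y $$ (i,k)\<bar> \<le> 1 + (\<Sum>j<d. \<bar>M $$ (j,j)\<bar>)"
proof -
  have "M $$ (i,i) = (\<Sum>t<r. Y $$ (i,t) * Y $$ (i,t))" using index_mult_transpose_sum[OF Y Y i i] YM by simp
  also have "\<dots> \<ge> Y $$ (i,k) * Y $$ (i,k)"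
    by (rule member_le_sum) (use k in auto)
  finally have square: "(Y $$ (i,k))\<^sup>2 \<le> M $$ (i,i)" by (simp add: power2_eq_square)
  have diag: "M $$ (i,i) \<le> (\<Sum>j<d. \<bar>M $$ (j,j)\<bar>)"
    using member_le_sum[of i "{..<d}" "\<lambda>j. \<bar>M $$ (j,j)\<bar>"] i by auto
  have "\<bar>Y $$ (i,k)\<bar> \<le> 1 + (Y $$ (i,k))\<^sup>2"
  proof (cases "\<bar>Y $$ (i,k)\<bar> \<le> 1")
    case True then show ?thesis by (simp add: add_increasing2)
  next
    case False
    then have "\<bar>Y $$ (i,k)\<bar> * 1 \<le> \<bar>Y $$ (i,k)\<bar> * \<bar>Y $$ (i,k)\<bar>" by (intro mult_left_mono) auto
    then show ?thesis by (simp add: power2_eq_square abs_mult_self_eq)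
  qed
  then show ?thesis using square diag by linarith
qed

lemma exists_best_aligned_factor:
  fixes U Y0 M :: "real mat"
  assumes U: "U \<in> carrier_mat d r" and Y0: "Y0 \<in> carrier_mat d r" and Y0M: "Y0 * transpose_mat Y0 = M"
  shows "\<exists>Y \<in> carrier_mat d r. Y * transpose_mat Y = M \<and>
     (\<forall>Y' \<in> carrier_mat d r. Y' * transpose_mat Y' = M \<longrightarrow> frob_inner U Y' \<le> frob_inner U Y)"
proof -
  define cb where "cb = 1 + (\<Sum>j<d. \<bar>M $$ (j,j)\<bar>)"
  define tofun where "tofun Y = (\<lambda>(i,k). if i < d \<and> k < r then Y $$ (i,k) else 0 :: real)" for Y :: "real mat"
  define S where "S = PiE UNIV (\<lambda>_::nat\<times>nat. {-cb..cb}) \<inter>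
      {f. \<forall>i. \<forall>j. i < d \<longrightarrow> j < d \<longrightarrow> (\<Sum>k<r. f (i,k) * f (j,k)) = M $$ (i,j)}"
  define obj where "obj f = (\<Sum>i<d. \<Sum>k<r. U $$ (i,k) * f (i,k))" for f :: "nat \<times> nat \<Rightarrow> real"
  have cbpos: "cb \<ge> 0" unfolding cb_def by (simp add: sum_nonneg)
  have compS: "compact S" unfolding S_def by (intro compact_Int_closed compact_cube closed_gram_equations)
  have inS: "tofun Y' \<in> S" if Y': "Y' \<in> carrier_mat d r" "Y' * transpose_mat Y' = M" for Y'
  proof -
    have eb: "\<bar>Y' $$ (i,k)\<bar> \<le> cb" if "i < d" "k < r" for i k
      using gram_factor_entry_bound[OF Y'(1) Y'(2) that] unfolding cb_def .
    have "tofun Y' (i,k) \<in> {-cb..cb}" for i k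
      using eb[of i k] cbpos unfolding tofun_def
      by (auto simp: abs_le_iff)
    moreover have "(\<Sum>k<r. tofun Y' (i,k) * tofun Y' (j,k)) = M $$ (i,j)" if "i < d" "j < d" for i j
      using index_mult_transpose_sum[OF Y'(1) Y'(1) that] Y'(2) that unfolding tofun_def by auto
    ultimately show ?thesis unfolding S_def by auto
  qed
  have objeq: "obj (tofun Y') = frob_inner U Y'" for Y'
    unfolding obj_def tofun_def frob_inner_carrier[OF U] by (intro sum.cong refl) auto
  have "S \<noteq> {}" using inS[OF Y0 Y0M] by auto
  moreover have "continuous_on S obj"
    unfolding obj_def
    by (intro continuous_on_sum continuous_on_mult continuous_on_const continuous_on_subset[OF continuous_on_product_coordinates]) auto
  ultimately obtain f where fS: "f \<in> S" and fmax: "\<And>g. g \<in> S \<Longrightarrow> obj g \<le> obj f"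
    using continuous_attains_sup[OF compS] by blast
  define Y where "Y = mat d r f"
  have Yc: "Y \<in> carrier_mat d r" unfolding Y_def by simp
  have Mc: "M \<in> carrier_mat d d" using Y0M Y0 by auto
  have YM: "Y * transpose_mat Y = M"
  proof (rule eq_matI)
    fix i j assume "i < dim_row M" "j < dim_col M"
    then have ij: "i < d" "j < d" using Mc by auto
    have "(Y * transpose_mat Y) $$ (i,j) = (\<Sum>k<r. Y $$ (i,k) * Y $$ (j,k))"
      by (rule index_mult_transpose_sum[OF Yc Yc ij])
    also have "\<dots> = (\<Sum>k<r. f (i,k) * f (j,k))"
      unfolding Y_def using ij by simp
    also have "\<dots> = M $$ (i,j)" using fS ij unfolding S_def by auto
    finally show "(Y * transpose_mat Y) $$ (i,j) = M $$ (i,j)" .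
  qed (use Mc Yc in auto)
  have "obj f = frob_inner U Y"
    unfolding obj_def Y_def frob_inner_carrier[OF U] by (intro sum.cong refl) auto
  then show ?thesis using Yc YM fmax inS objeq by metis
qed

lemma frob_inner_mult_right_trace:
  fixes U Y G :: "real mat"
  assumes U: "U \<in> carrier_mat d r" and Y: "Y \<in> carrier_mat d r" and G: "G \<in> carrier_mat r r"
  shows "frob_inner U (Y * G) = (\<Sum>a<r. \<Sum>b<r. (\<Sum>i<d. U $$ (i,a) * Y $$ (i,b)) * G $$ (b,a))"
proof -
  have "frob_inner U (Y * G) = (\<Sum>i<d. \<Sum>a<r. \<Sum>b<r. U $$ (i,a) * Y $$ (i,b) * G $$ (b,a))"
    unfolding frob_inner_carrier[OF U]
    by (intro sum.cong refl) (simp add: index_mult_mat_sum[OF Y G] sum_distrib_left mult.assoc)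
  also have "\<dots> = (\<Sum>a<r. \<Sum>i<d. \<Sum>b<r. U $$ (i,a) * Y $$ (i,b) * G $$ (b,a))"
    by (rule sum.swap)
  also have "\<dots> = (\<Sum>a<r. \<Sum>b<r. \<Sum>i<d. U $$ (i,a) * Y $$ (i,b) * G $$ (b,a))"
    by (intro sum.cong refl sum.swap)
  also have "\<dots> = (\<Sum>a<r. \<Sum>b<r. (\<Sum>i<d. U $$ (i,a) * Y $$ (i,b)) * G $$ (b,a))"
    by (simp add: sum_distrib_right)
  finally show ?thesis .
qed

section \<open>Trace-maximal matrices are symmetric positive semidefinite\<close>

definition householder :: "nat \<Rightarrow> (nat \<Rightarrow> real) \<Rightarrow> real mat" where
  "householder r x = mat r r (\<lambda>(a,b). (if a = b then 1 else 0) - 2 * x a * x b)"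

lemma householder_carrier[simp]: "householder r x \<in> carrier_mat r r"
  unfolding householder_def by simp

lemma householder_dims[simp]: "dim_row (householder r x) = r" "dim_col (householder r x) = r"
  unfolding householder_def by simp_all

lemma householder_transpose: "transpose_mat (householder r x) = householder r x"
  unfolding householder_def by (rule eq_matI) auto

lemma householder_mult_index:
  assumes "a < r" "b < r"
  shows "(householder r x * householder r z) $$ (a,b) = (if a = b then 1 else 0) - 2 * x a * x b - 2 * z a * z b
      + 4 * (\<Sum>t<r. x t * z t) * x a * z b"
proof -
  have "(householder r x * householder r z) $$ (a,b)
      = (\<Sum>t<r. ((if a = t then 1 else 0) - 2 * x a * x t) * ((if t = b then 1 else 0) - 2 * z t * z b))"
    using assms by (subst index_mult_mat_sum[of _ r r _ r]) (auto simp: householder_def intro!: sum.cong)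
  also have "\<dots> = (\<Sum>t<r. (if a = t then (if t = b then 1 else 0) else 0) - (if a = t then 2 * z t * z b else 0)
     - (if t = b then 2 * x a * x t else 0) + 4 * x a * z b * (x t * z t))"
    by (intro sum.cong refl) (auto simp: algebra_simps)
  also have "\<dots> = (\<Sum>t<r. (if a = t then (if t = b then 1 else 0) else 0)) - (\<Sum>t<r. (if a = t then 2 * z t * z b else 0))
     - (\<Sum>t<r. (if t = b then 2 * x a * x t else 0)) + 4 * x a * z b * (\<Sum>t<r. x t * z t)"
    by (simp only: sum.distrib sum_subtractf sum_distrib_left)
  also have "\<dots> = (if a = b then 1 else 0) - 2 * x a * x b - 2 * z a * z b
      + 4 * (\<Sum>t<r. x t * z t) * x a * z b"
    using assms by simp
  finally show ?thesis .
qed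

lemma householder_orthogonal:
  assumes "(\<Sum>t<r. x t * x t) = 1"
  shows "householder r x * transpose_mat (householder r x) = 1\<^sub>m r"
  by (rule eq_matI)
     (auto simp: householder_transpose householder_mult_index assms simp del: index_mult_mat(1))

lemma trace_mult_reflection_pair:
  fixes C :: "nat \<Rightarrow> nat \<Rightarrow> real"
  shows "(\<Sum>a<r. \<Sum>b<r. C a b * ((if b = a then 1 else 0) - 2 * x b * x a - 2 * z b * z a + 4 * s * x b * z a))
     = (\<Sum>a<r. C a a) - 2 * (\<Sum>a<r. \<Sum>b<r. x a * C a b * x b) - 2 * (\<Sum>a<r. \<Sum>b<r. z a * C a b * z b)
       + 4 * s * (\<Sum>a<r. \<Sum>b<r. z a * C a b * x b)"
proof -
  have diag: "(\<Sum>b<r. C a b * (if b = a then 1 else 0)) = C a a" if "a < r" for a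
  proof -
    have "(\<Sum>b<r. C a b * (if b = a then 1 else 0)) = (\<Sum>b<r. if b = a then C a a else 0)"
      by (intro sum.cong) auto
    then show ?thesis using that by simp
  qed
  have "(\<Sum>a<r. \<Sum>b<r. C a b * ((if b = a then 1 else 0) - 2 * x b * x a - 2 * z b * z a + 4 * s * x b * z a))
    = (\<Sum>a<r. (\<Sum>b<r. C a b * (if b = a then 1 else 0)) - 2 * (\<Sum>b<r. x a * C a b * x b)
        - 2 * (\<Sum>b<r. z a * C a b * z b) + 4 * s * (\<Sum>b<r. z a * C a b * x b))"
    by (intro sum.cong refl) (simp add: sum.distrib sum_subtractf sum_distrib_left algebra_simps)
  then show ?thesis using diag by (simp add: sum.distrib sum_subtractf sum_distrib_left)
qed

lemma cross_term_vanishes: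
  fixes w T :: real
  assumes nonneg: "\<And>p q. p\<^sup>2 + q\<^sup>2 = 1 \<Longrightarrow> q\<^sup>2 * T + p * q * w \<ge> 0"
  shows "w = 0"
proof (rule ccontr)
  assume "w \<noteq> 0"
  then have wpos: "\<bar>w\<bar> > 0" by simp
  define q where "q = min (1/2) (\<bar>w\<bar> / (4 * (\<bar>T\<bar> + 1)))"
  define p where "p = sqrt (1 - q\<^sup>2)"
  have q: "0 < q" "q \<le> 1/2"
    unfolding q_def using wpos by (simp add: add_pos_nonneg) (rule min.cobounded1)
  then have "q\<^sup>2 \<le> 1/4" using power_mono[of q "1/2" 2] by (simp add: power2_eq_square)
  then have "1/2 \<le> p" unfolding p_def by (intro real_le_rsqrt) (simp add: power2_eq_square)
  moreover have "p\<^sup>2 + q\<^sup>2 = 1" unfolding p_def using \<open>q\<^sup>2 \<le> 1/4\<close> by simp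
  ultimately have p: "p \<ge> 1/2" "p\<^sup>2 + q\<^sup>2 = 1" by auto
  have plus: "q * (q * T) + q * (p * w) \<ge> 0" using nonneg[OF p(2)] by (simp add: power2_eq_square algebra_simps)
  have minus: "q * (q * T) - q * (p * w) \<ge> 0" using nonneg[of "-p" q] p(2) by (simp add: power2_eq_square algebra_simps)
  have "q * (q * T) \<ge> 0" using plus minus by linarith
  then have T: "T \<ge> 0" using q by (simp add: zero_le_mult_iff)
  have "q * (p * \<bar>w\<bar>) \<le> q * (q * T)" using plus minus by (cases "w \<ge> 0") auto
  then have "p * \<bar>w\<bar> \<le> q * \<bar>T\<bar>" using q T by simp
  moreover have "(1/2) * \<bar>w\<bar> \<le> p * \<bar>w\<bar>" using p by (intro mult_right_mono) auto
  moreover have "q * \<bar>T\<bar> \<le> \<bar>w\<bar> / (4 * (\<bar>T\<bar> + 1)) * \<bar>T\<bar>"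
    by (intro mult_right_mono) (auto simp: q_def)
  moreover have "\<bar>w\<bar> / (4 * (\<bar>T\<bar> + 1)) * \<bar>T\<bar> < (1/2) * \<bar>w\<bar>"
    using wpos by (simp add: field_simps) (smt (verit) mult_pos_pos mult_nonneg_nonneg)
  ultimately show False by linarith
qed

locale trace_maximal =
  fixes r :: nat and C :: "nat \<Rightarrow> nat \<Rightarrow> real"
  assumes trace_max: "\<And>G. G \<in> carrier_mat r r \<Longrightarrow> G * transpose_mat G = 1\<^sub>m r \<Longrightarrow>
    (\<Sum>a<r. \<Sum>b<r. C a b * G $$ (b,a)) \<le> (\<Sum>a<r. C a a)"
begin

lemma reflection_pair_inequality:
  assumes x: "(\<Sum>t<r. x t * x t) = 1" and z: "(\<Sum>t<r. z t * z t) = 1"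
  shows "(\<Sum>a<r. \<Sum>b<r. x a * C a b * x b) + (\<Sum>a<r. \<Sum>b<r. z a * C a b * z b)
       - 2 * (\<Sum>t<r. x t * z t) * (\<Sum>a<r. \<Sum>b<r. z a * C a b * x b) \<ge> 0"
proof -
  define G where "G = householder r x * householder r z"
  have Gc: "G \<in> carrier_mat r r" unfolding G_def by (rule mult_carrier_mat[OF householder_carrier householder_carrier])
  have "G * transpose_mat G = householder r x * (householder r z * (householder r z * householder r x))"
    unfolding G_def
    by (simp add: transpose_mult[OF householder_carrier householder_carrier] householder_transpose
        assoc_mult_mat[OF householder_carrier householder_carrier mult_carrier_mat[OF householder_carrier householder_carrier]])
  also have "householder r z * (householder r z * householder r x) = householder r x"
    using householder_orthogonal[OF z]
    by (simp add: householder_transpose assoc_mult_mat[of _ r r _ r _ r, symmetric])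
  finally have "G * transpose_mat G = 1\<^sub>m r"
    using householder_orthogonal[OF x] by (simp add: householder_transpose)
  moreover have "(\<Sum>a<r. \<Sum>b<r. C a b * G $$ (b,a)) = (\<Sum>a<r. \<Sum>b<r. C a b * ((if b = a then 1 else 0)
      - 2 * x b * x a - 2 * z b * z a + 4 * (\<Sum>t<r. x t * z t) * x b * z a))"
    unfolding G_def by (intro sum.cong refl) (simp add: householder_mult_index del: index_mult_mat(1))
  ultimately show ?thesis using trace_max[OF Gc] unfolding trace_mult_reflection_pair by linarith
qed

lemma psd: "(\<Sum>a<r. \<Sum>b<r. x a * C a b * x b) \<ge> 0"
proof -
  have unit: "(\<Sum>a<r. \<Sum>b<r. x a * C a b * x b) \<ge> 0" if x: "(\<Sum>t<r. x t * x t) = 1" for x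
  proof -
    have "(\<Sum>a<r. \<Sum>b<r. C a b * householder r x $$ (b,a)) = (\<Sum>a<r. \<Sum>b<r. C a b * ((if b = a then 1 else 0)
        - 2 * x b * x a - 2 * (\<lambda>_. 0) b * (\<lambda>_. 0) a + 4 * 0 * x b * (\<lambda>_. 0) a))"
      by (intro sum.cong refl) (simp add: householder_def)
    then show ?thesis using trace_max[OF householder_carrier householder_orthogonal[OF x]]
      unfolding trace_mult_reflection_pair by simp
  qed
  define s where "s = (\<Sum>t<r. x t * x t)"
  show ?thesis
  proof (cases "s = 0")
    case True
    then have "\<And>t. t < r \<Longrightarrow> x t = 0"
      unfolding s_def by (subst (asm) sum_nonneg_eq_0_iff) auto
    then show ?thesis by simp
  next
    case False
    moreover have "s \<ge> 0" unfolding s_def by (intro sum_nonneg) auto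
    ultimately have spos: "s > 0" by simp
    define x' where "x' t = x t / sqrt s" for t
    have "(\<Sum>t<r. x' t * x' t) = 1"
      unfolding x'_def using spos by (simp add: sum_divide_distrib[symmetric] s_def)
    from unit[OF this] have "0 \<le> (\<Sum>a<r. \<Sum>b<r. x' a * C a b * x' b)" .
    also have "\<dots> = (\<Sum>a<r. \<Sum>b<r. x a * C a b * x b) / s"
      unfolding x'_def using spos by (simp add: sum_divide_distrib field_simps)
    finally show ?thesis using spos by (simp add: zero_le_divide_iff)
  qed
qed

lemma psd_gram_sum: "(\<Sum>a<r. \<Sum>b<r. C a b * (\<Sum>i<d. w i a * w i b)) \<ge> 0"
proof -
  have "(\<Sum>a<r. \<Sum>b<r. C a b * (\<Sum>i<d. w i a * w i b)) = (\<Sum>a<r. \<Sum>i<d. \<Sum>b<r. w i a * C a b * w i b)"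
    by (intro sum.cong refl) (simp add: sum_distrib_left sum.swap[of _ "{..<r}"] algebra_simps)
  also have "\<dots> = (\<Sum>i<d. \<Sum>a<r. \<Sum>b<r. w i a * C a b * w i b)" by (rule sum.swap)
  also have "\<dots> \<ge> 0" by (intro sum_nonneg psd)
  finally show ?thesis .
qed

lemma symmetric:
  assumes ab: "a < r" "b < r"
  shows "C a b = C b a"
proof (cases "a = b")
  case False
  define tp where "tp p q t = (if t = a then p else if t = b then q else (0::real))" for p q t
  have sum_tp: "(\<Sum>t<r. tp p q t * f t) = p * f a + q * f b" for p q and f :: "nat \<Rightarrow> real"
  proof -
    have "(\<Sum>t<r. tp p q t * f t) = (\<Sum>t<r. (if t = a then p * f a else 0) + (if t = b then q * f b else 0))"
      unfolding tp_def by (intro sum.cong refl) (use False in auto)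
    then show ?thesis using ab by (simp add: sum.distrib)
  qed
  have quad_tp: "(\<Sum>i<r. \<Sum>j<r. tp p1 q1 i * C i j * tp p2 q2 j)
      = p1 * (p2 * C a a + q2 * C a b) + q1 * (p2 * C b a + q2 * C b b)" for p1 q1 p2 q2
  proof -
    have "(\<Sum>i<r. \<Sum>j<r. tp p1 q1 i * C i j * tp p2 q2 j) = (\<Sum>i<r. tp p1 q1 i * (\<Sum>j<r. tp p2 q2 j * C i j))"
      by (simp add: sum_distrib_left algebra_simps)
    then show ?thesis by (simp add: sum_tp)
  qed
  have dot_tp: "(\<Sum>t<r. tp p1 q1 t * tp p2 q2 t) = p1 * p2 + q1 * q2" for p1 q1 p2 q2
    using sum_tp[of p1 q1 "tp p2 q2"] False by (simp add: tp_def)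
  have "q\<^sup>2 * (C a a + C b b) + p * q * (C a b - C b a) \<ge> 0" if pq: "p\<^sup>2 + q\<^sup>2 = 1" for p q
  proof -
    have "(\<Sum>t<r. tp 1 0 t * tp 1 0 t) = 1" "(\<Sum>t<r. tp p q t * tp p q t) = 1"
      using pq by (simp_all add: dot_tp power2_eq_square)
    from reflection_pair_inequality[OF this]
    have "C a a + (p * (p * C a a + q * C a b) + q * (p * C b a + q * C b b)) - 2 * p * (p * C a a + q * C b a) \<ge> 0"
      unfolding quad_tp dot_tp by simp
    moreover have "(p * p + q * q) * C a a = C a a" using pq by (simp add: power2_eq_square)
    ultimately show ?thesis by (simp add: power2_eq_square algebra_simps)
  qed
  then have "C a b - C b a = 0" by (rule cross_term_vanishes)
  then show ?thesis by simp
qed simp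

end

lemma best_aligned_factor_trace_maximal:
  fixes U Y M :: "real mat"
  assumes U: "U \<in> carrier_mat d r" and Y: "Y \<in> carrier_mat d r" and YM: "Y * transpose_mat Y = M"
    and best: "\<forall>Y' \<in> carrier_mat d r. Y' * transpose_mat Y' = M \<longrightarrow> frob_inner U Y' \<le> frob_inner U Y"
  shows "trace_maximal r (\<lambda>a b. \<Sum>i<d. U $$ (i,a) * Y $$ (i,b))"
proof
  fix G :: "real mat"
  assume G: "G \<in> carrier_mat r r" "G * transpose_mat G = 1\<^sub>m r"
  have "Y * G \<in> carrier_mat d r" "(Y * G) * transpose_mat (Y * G) = M"
    using Y G gram_mult_orthogonal[OF Y G] YM by auto
  then have "frob_inner U (Y * G) \<le> frob_inner U Y" using best by blast
  moreover have "frob_inner U Y = (\<Sum>a<r. \<Sum>i<d. U $$ (i,a) * Y $$ (i,a))"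
    unfolding frob_inner_carrier[OF U] by (rule sum.swap)
  ultimately show "(\<Sum>a<r. \<Sum>b<r. (\<Sum>i<d. U $$ (i,a) * Y $$ (i,b)) * G $$ (b,a))
      \<le> (\<Sum>a<r. \<Sum>i<d. U $$ (i,a) * Y $$ (i,a))"
    unfolding frob_inner_mult_right_trace[OF U Y G(1)] by simp
qed

section \<open>The difference of two aligned factors\<close>

lemma cauchy_schwarz_sum:
  fixes v :: "nat \<Rightarrow> real"
  shows "(\<Sum>a<r. v a)\<^sup>2 \<le> real r * (\<Sum>a<r. (v a)\<^sup>2)"
proof -
  have "0 \<le> (\<Sum>a<r. \<Sum>b<r. (v a - v b)\<^sup>2)" by (intro sum_nonneg) auto
  also have "\<dots> = (\<Sum>a<r. \<Sum>b<r. (v a)\<^sup>2 + (v b)\<^sup>2 - 2 * (v a * v b))"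
    by (intro sum.cong refl) (simp add: power2_eq_square algebra_simps)
  also have "\<dots> = (\<Sum>a<r. \<Sum>b<r. (v a)\<^sup>2) + (\<Sum>a<r. \<Sum>b<r. (v b)\<^sup>2) - 2 * (\<Sum>a<r. \<Sum>b<r. v a * v b)"
    by (simp add: sum.distrib sum_subtractf sum_distrib_left)
  also have "(\<Sum>a<r. \<Sum>b<r. v a * v b) = (\<Sum>a<r. v a)\<^sup>2"
    by (simp add: sum_product power2_eq_square)
  also have "(\<Sum>a<r. \<Sum>b<r. (v a)\<^sup>2) = real r * (\<Sum>a<r. (v a)\<^sup>2)" by (simp add: sum_distrib_left)
  also have "(\<Sum>a<r. \<Sum>b<r. (v b)\<^sup>2) = real r * (\<Sum>a<r. (v a)\<^sup>2)" by simp
  finally show ?thesis by simp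
qed

lemma sum_diag_diff_square_le:
  fixes A B :: "nat \<Rightarrow> nat \<Rightarrow> real"
  shows "(\<Sum>a<r. B a a - A a a)\<^sup>2 \<le> real r * (\<Sum>a<r. \<Sum>b<r. (A a b - B a b)\<^sup>2)"
proof -
  have "(\<Sum>a<r. (B a a - A a a)\<^sup>2) \<le> (\<Sum>a<r. \<Sum>b<r. (A a b - B a b)\<^sup>2)"
  proof (intro sum_mono)
    fix a assume "a \<in> {..<r}"
    then have "(A a a - B a a)\<^sup>2 \<le> (\<Sum>b<r. (A a b - B a b)\<^sup>2)"
      using member_le_sum[of a "{..<r}" "\<lambda>b. (A a b - B a b)\<^sup>2"] by auto
    then show "(B a a - A a a)\<^sup>2 \<le> (\<Sum>b<r. (A a b - B a b)\<^sup>2)" by (simp add: power2_commute)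
  qed
  then show ?thesis
    using cauchy_schwarz_sum[of "\<lambda>a. B a a - A a a" r] by (meson mult_left_mono of_nat_0_le_iff order_trans)
qed

lemma frob_diff_minus_inner_le:
  fixes U Y :: "real mat"
  assumes U: "U \<in> carrier_mat d r" and Y: "Y \<in> carrier_mat d r"
  shows "frob_inner (U - Y) (U - Y) - 4 * frob_inner U (U - Y)
    \<le> 2 * (\<Sum>a<r. (\<Sum>i<d. Y $$ (i,a) * Y $$ (i,a)) - (\<Sum>i<d. U $$ (i,a) * U $$ (i,a)))"
proof -
  have D: "U - Y \<in> carrier_mat d r" using U Y by auto
  have "frob_inner (U - Y) (U - Y) - 4 * frob_inner U (U - Y)
      = (\<Sum>i<d. \<Sum>a<r. (U $$ (i,a) - Y $$ (i,a))\<^sup>2 - 4 * (U $$ (i,a) * (U $$ (i,a) - Y $$ (i,a))))"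
    unfolding frob_inner_carrier[OF D] frob_inner_carrier[OF U] sum_subtractf sum_distrib_left
    by (intro arg_cong2[where f = "(-)"] sum.cong refl) (use U Y in \<open>auto simp: power2_eq_square\<close>)
  also have "\<dots> \<le> (\<Sum>i<d. \<Sum>a<r. 2 * (Y $$ (i,a) * Y $$ (i,a)) - 2 * (U $$ (i,a) * U $$ (i,a)))"
  proof (intro sum_mono)
    fix i a
    have "0 \<le> (U $$ (i,a) - Y $$ (i,a))\<^sup>2" by simp
    then show "(U $$ (i,a) - Y $$ (i,a))\<^sup>2 - 4 * (U $$ (i,a) * (U $$ (i,a) - Y $$ (i,a)))
        \<le> 2 * (Y $$ (i,a) * Y $$ (i,a)) - 2 * (U $$ (i,a) * U $$ (i,a))"
      by (simp add: power2_eq_square algebra_simps)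
  qed
  also have "\<dots> = (\<Sum>a<r. \<Sum>i<d. 2 * (Y $$ (i,a) * Y $$ (i,a)) - 2 * (U $$ (i,a) * U $$ (i,a)))"
    by (rule sum.swap)
  finally show ?thesis by (simp add: sum_subtractf sum_distrib_left)
qed

context trace_maximal
begin

text \<open>For \<open>D = U - Y\<close> and \<open>C = U\<^sup>T Y\<close>, the identity
  \<open>2 \<parallel>U U\<^sup>T - Y Y\<^sup>T\<parallel>\<^sup>2 - \<parallel>D D\<^sup>T\<parallel>\<^sup>2 = \<parallel>U\<^sup>T U - Y\<^sup>T Y\<parallel>\<^sup>2 + 4 \<langle>C, D\<^sup>T D\<rangle>\<close> holds whenever \<open>C\<close> is symmetric,
  and the last term is nonnegative because \<open>C\<close> is positive semidefinite.\<close>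

lemma aligned_gram_diff_bound:
  fixes U Y :: "real mat"
  assumes U: "U \<in> carrier_mat d r" and Y: "Y \<in> carrier_mat d r"
    and C: "C = (\<lambda>a b. \<Sum>i<d. U $$ (i,a) * Y $$ (i,b))"
  defines "A a b \<equiv> (\<Sum>i<d. U $$ (i,a) * U $$ (i,b))"
    and "B a b \<equiv> (\<Sum>i<d. Y $$ (i,a) * Y $$ (i,b))"
  shows "frob_inner ((U - Y) * transpose_mat (U - Y)) ((U - Y) * transpose_mat (U - Y))
           + (\<Sum>a<r. \<Sum>b<r. (A a b - B a b)\<^sup>2)
         \<le> 2 * frob_inner (U * transpose_mat U - Y * transpose_mat Y) (U * transpose_mat U - Y * transpose_mat Y)"
proof -
  define D where "D = U - Y"
  have Dc: "D \<in> carrier_mat d r" unfolding D_def using U Y by auto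
  have DD: "(\<Sum>i<d. D $$ (i,a) * D $$ (i,b)) = A a b + B a b - 2 * C a b" if "a < r" "b < r" for a b
  proof -
    have "(\<Sum>i<d. D $$ (i,a) * D $$ (i,b)) = (\<Sum>i<d. U $$ (i,a) * U $$ (i,b) + Y $$ (i,a) * Y $$ (i,b)
        - U $$ (i,a) * Y $$ (i,b) - U $$ (i,b) * Y $$ (i,a))"
      by (intro sum.cong refl) (use U Y that in \<open>simp add: D_def algebra_simps\<close>)
    then show ?thesis
      using symmetric[OF that] unfolding A_def B_def C by (simp add: sum.distrib sum_subtractf)
  qed
  have cross_nonneg: "(\<Sum>a<r. \<Sum>b<r. C a b * (A a b + B a b - 2 * C a b)) \<ge> 0"
    using psd_gram_sum[where w = "\<lambda>i a. D $$ (i,a)" and d = d] by (simp add: DD)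
  have "(\<Sum>a<r. \<Sum>b<r. 2 * (A a b * A a b) - 4 * (C a b * C a b) + 2 * (B a b * B a b)
       - (A a b + B a b - 2 * C a b) * (A a b + B a b - 2 * C a b))
     = (\<Sum>a<r. \<Sum>b<r. (A a b - B a b)\<^sup>2 + 4 * (C a b * (A a b + B a b - 2 * C a b)))"
    by (intro sum.cong refl) (simp add: power2_eq_square algebra_simps)
  then have identity: "2 * ((\<Sum>a<r. \<Sum>b<r. A a b * A a b) - 2 * (\<Sum>a<r. \<Sum>b<r. C a b * C a b)
        + (\<Sum>a<r. \<Sum>b<r. B a b * B a b))
      - (\<Sum>a<r. \<Sum>b<r. (A a b + B a b - 2 * C a b) * (A a b + B a b - 2 * C a b))
      = (\<Sum>a<r. \<Sum>b<r. (A a b - B a b)\<^sup>2) + 4 * (\<Sum>a<r. \<Sum>b<r. C a b * (A a b + B a b - 2 * C a b))"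
    by (simp add: sum.distrib sum_subtractf sum_distrib_left)
  have "frob_inner (D * transpose_mat D) (D * transpose_mat D)
      = (\<Sum>a<r. \<Sum>b<r. (A a b + B a b - 2 * C a b) * (A a b + B a b - 2 * C a b))"
    unfolding frob_inner_gram[OF Dc Dc Dc Dc] by (intro sum.cong refl) (simp add: DD)
  moreover have "frob_inner (U * transpose_mat U - Y * transpose_mat Y) (U * transpose_mat U - Y * transpose_mat Y)
      = (\<Sum>a<r. \<Sum>b<r. A a b * A a b) - 2 * (\<Sum>a<r. \<Sum>b<r. C a b * C a b) + (\<Sum>a<r. \<Sum>b<r. B a b * B a b)"
  proof -
    have UU: "U * transpose_mat U \<in> carrier_mat d d" and YY: "Y * transpose_mat Y \<in> carrier_mat d d"
      using U Y by auto
    show ?thesis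
      unfolding frob_inner_diff_self[OF UU YY] frob_inner_gram[OF U U U U] frob_inner_gram[OF U U Y Y]
        frob_inner_gram[OF Y Y Y Y] A_def B_def C by simp
  qed
  moreover have "\<And>q Q e E G K :: real. q = Q \<Longrightarrow> e = E \<Longrightarrow> 2 * E - Q = G + 4 * K \<Longrightarrow> 0 \<le> K \<Longrightarrow> q + G \<le> 2 * e"
    by linarith
  ultimately show ?thesis using identity cross_nonneg unfolding D_def by blast
qed

end

section \<open>The landscape bound\<close>

lemma gram_difference_expansion:
  fixes U Y :: "real mat"
  assumes U: "U \<in> carrier_mat d r" and Y: "Y \<in> carrier_mat d r"
  shows "U * transpose_mat (U - Y) + (U - Y) * transpose_mat U
    = (U * transpose_mat U - Y * transpose_mat Y) + (U - Y) * transpose_mat (U - Y)"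
proof (rule eq_matI)
  fix j l assume "j < dim_row ((U * transpose_mat U - Y * transpose_mat Y) + (U - Y) * transpose_mat (U - Y))"
    "l < dim_col ((U * transpose_mat U - Y * transpose_mat Y) + (U - Y) * transpose_mat (U - Y))"
  then have jl: "j < d" "l < d" using U Y by auto
  have D: "U - Y \<in> carrier_mat d r" using U Y by auto
  have "(\<Sum>k<r. U $$ (j,k) * (U - Y) $$ (l,k) + (U - Y) $$ (j,k) * U $$ (l,k))
      = (\<Sum>k<r. U $$ (j,k) * U $$ (l,k) - Y $$ (j,k) * Y $$ (l,k) + (U - Y) $$ (j,k) * (U - Y) $$ (l,k))"
    by (intro sum.cong refl) (use U Y jl in \<open>simp add: algebra_simps\<close>)
  then show "(U * transpose_mat (U - Y) + (U - Y) * transpose_mat U) $$ (j,l)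
      = ((U * transpose_mat U - Y * transpose_mat Y) + (U - Y) * transpose_mat (U - Y)) $$ (j,l)"
    using U Y D jl
    by (simp add: index_mult_transpose_sum[OF U D jl] index_mult_transpose_sum[OF D U jl]
        index_mult_transpose_sum[OF U U jl] index_mult_transpose_sum[OF Y Y jl]
        index_mult_transpose_sum[OF D D jl] sum.distrib sum_subtractf del: index_mult_mat(1))
qed (use U Y in auto)

lemma stationary_difference_inequality:
  fixes U Y M :: "real mat"
  assumes Xc: "\<forall>i<n. X i \<in> carrier_mat d d"
    and sos: "second_order_stationary (f_obj n X eps M lam) d r U"
    and Y: "Y \<in> carrier_mat d r" and YM: "Y * transpose_mat Y = M"
  defines "D \<equiv> U - Y"
  shows "3 * meas_sqnorm n X (U * transpose_mat U - M)
    \<le> meas_sqnorm n X (D * transpose_mat D) + 2 * (\<Sum>i<n. eps i * meas n X (D * transpose_mat D) i)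
      + 4 * (\<Sum>i<n. eps i * meas n X (U * transpose_mat U - M) i)
      + 2 * lam * (frob_inner D D - 4 * frob_inner U D)"
proof -
  have U: "U \<in> carrier_mat d r" using sos unfolding second_order_stationary_def by auto
  have Dc: "D \<in> carrier_mat d r" unfolding D_def using U Y by auto
  define a where "a i = meas n X (U * transpose_mat U - M) i" for i
  define q where "q i = meas n X (D * transpose_mat D) i" for i
  have residual: "obs n X eps M i - meas n X (U * transpose_mat U) i = eps i - a i" if "i < n" for i
  proof -
    have "frob_inner (X i) (U * transpose_mat U - M) = 1 * frob_inner (X i) (U * transpose_mat U)
        + (-1) * frob_inner (X i) M + 0 * frob_inner (X i) M"
      by (rule frob_inner_lincomb_right[of _ d d]) (use U Y YM Xc that in auto)
    then show ?thesis unfolding obs_def a_def meas_def by (simp add: diff_divide_distrib)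
  qed
  have direction: "meas n X (U * transpose_mat D + D * transpose_mat U) i = a i + q i" if "i < n" for i
  proof -
    have "frob_inner (X i) (U * transpose_mat D + D * transpose_mat U)
        = 1 * frob_inner (X i) (U * transpose_mat U - M) + 1 * frob_inner (X i) (D * transpose_mat D)
          + 0 * frob_inner (X i) M"
      using Xc that U Y Dc unfolding D_def gram_difference_expansion[OF U Y] YM[symmetric]
      by (intro frob_inner_lincomb_right[of _ d d]) auto
    then show ?thesis unfolding a_def q_def meas_def by (simp add: add_divide_distrib)
  qed
  have first: "(\<Sum>i<n. (eps i - a i) * (a i + q i)) = 2 * lam * frob_inner U D"
    using second_order_stationary_conditions(1)[OF sos Dc Xc] by (simp add: residual direction)
  have second: "(\<Sum>i<n. (a i + q i)\<^sup>2) - 2 * (\<Sum>i<n. (eps i - a i) * q i) + 2 * lam * frob_inner D D \<ge> 0"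
    using second_order_stationary_conditions(2)[OF sos Dc Xc] by (simp add: residual direction q_def)
  have "(\<Sum>i<n. (eps i - a i) * (a i + q i))
      = (\<Sum>i<n. eps i * a i) + (\<Sum>i<n. eps i * q i) - (\<Sum>i<n. (a i)\<^sup>2) - (\<Sum>i<n. a i * q i)"
    by (simp add: sum.distrib sum_subtractf algebra_simps power2_eq_square)
  moreover have "(\<Sum>i<n. (a i + q i)\<^sup>2) = (\<Sum>i<n. (a i)\<^sup>2) + 2 * (\<Sum>i<n. a i * q i) + (\<Sum>i<n. (q i)\<^sup>2)"
    by (simp add: sum.distrib sum_distrib_left power2_eq_square algebra_simps)
  moreover have "(\<Sum>i<n. (eps i - a i) * q i) = (\<Sum>i<n. eps i * q i) - (\<Sum>i<n. a i * q i)"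
    by (simp add: sum_subtractf algebra_simps)
  ultimately show ?thesis
    using first second unfolding meas_sqnorm_def a_def[symmetric] q_def[symmetric] by (simp add: algebra_simps)
qed

lemma good_event_noise_bound:
  assumes good: "good_event d n r sigma delta Cev X eps" and n: "n > 0"
    and A: "A \<in> carrier_mat d d" "symmetric_mat A" "mat_rank A \<le> 2 * r"
  shows "\<bar>\<Sum>i<n. eps i * meas n X A i\<bar> \<le> Cev * sigma * sqrt (real d * real r) * frob_norm A"
proof -
  define Z where "Z = (\<Sum>i<n. eps i * frob_inner (X i) A)"
  have sn: "sqrt (real n) > 0" using n by simp
  have "(\<Sum>i<n. eps i * meas n X A i) = Z / sqrt (real n)"
    unfolding Z_def meas_def by (simp add: sum_divide_distrib)
  also have "\<dots> = sqrt (real n) * ((1 / real n) * Z)"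
    using sn by (simp add: field_simps)
  moreover have "\<bar>(1 / real n) * Z\<bar> \<le> Cev * sigma * sqrt (real d * real r / real n) * frob_norm A"
    using good A unfolding good_event_def Z_def by blast
  then have "sqrt (real n) * \<bar>(1 / real n) * Z\<bar>
      \<le> sqrt (real n) * (Cev * sigma * sqrt (real d * real r / real n) * frob_norm A)"
    using sn by (intro mult_left_mono) auto
  then have "sqrt (real n) * \<bar>(1 / real n) * Z\<bar>
      \<le> Cev * sigma * (sqrt (real n) * sqrt (real d * real r / real n)) * frob_norm A"
    by (simp add: algebra_simps)
  moreover have "sqrt (real n) * sqrt (real d * real r / real n) = sqrt (real d * real r)"
    using n by (simp add: real_sqrt_mult[symmetric])
  ultimately show ?thesis using sn by (simp add: abs_mult)
qed

text \<open>In the application \<open>E\<close> and \<open>F\<close> are the Frobenius norms of \<open>U U\<^sup>T - M\<close> and \<open>D D\<^sup>T\<close>, \<open>Sa\<close> and \<open>Sq\<close>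
  their squared measurement norms, \<open>Sea\<close> and \<open>Seq\<close> their correlations with the noise, and
  \<open>kap = Cev sigma sqrt (d r)\<close>.\<close>

lemma error_bound_from_landscape_inequalities:
  fixes E F G2 T W Sa Sq Seq Sea lam kap del r :: real
  assumes stationary: "3 * Sa \<le> Sq + 2 * Seq + 4 * Sea + 2 * lam * W"
    and rip: "(1 - del) * E\<^sup>2 \<le> Sa" "Sq \<le> (1 + del) * F\<^sup>2"
    and noise: "\<bar>Seq\<bar> \<le> kap * F" "\<bar>Sea\<bar> \<le> kap * E"
    and aligned: "F\<^sup>2 + G2 \<le> 2 * E\<^sup>2" and trace: "T\<^sup>2 \<le> r * G2" "W \<le> 2 * T"
    and nonneg: "E \<ge> 0" "F \<ge> 0" "G2 \<ge> 0" "kap \<ge> 0" "lam \<ge> 0" "r \<ge> 0"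
    and del: "0 \<le> del" "del \<le> 1/10"
  shows "E \<le> 14 * kap + 12 * lam * sqrt r"
proof -
  have sqrt2: "sqrt 2 \<le> 3/2" by (rule real_le_lsqrt) (auto simp: power2_eq_square)
  have F2: "F\<^sup>2 \<le> 2 * E\<^sup>2" and G2: "G2 \<le> 2 * E\<^sup>2"
    using aligned nonneg(3) zero_le_power2[of F] by linarith+
  have "sqrt (F\<^sup>2) \<le> sqrt (2 * E\<^sup>2)" using F2 by (rule real_sqrt_le_mono)
  then have F: "F \<le> sqrt 2 * E" using nonneg by (simp add: real_sqrt_mult)
  have "T\<^sup>2 \<le> r * (2 * E\<^sup>2)" using trace(1) mult_left_mono[OF G2 nonneg(6)] by linarith
  then have "sqrt (T\<^sup>2) \<le> sqrt (r * (2 * E\<^sup>2))" by (rule real_sqrt_le_mono)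
  then have T: "T \<le> sqrt r * sqrt 2 * E" using nonneg by (simp add: real_sqrt_mult)
  have "(1 - del) * E\<^sup>2 * 3 \<le> (1 + del) * (2 * E\<^sup>2) + 2 * (kap * (sqrt 2 * E)) + 4 * (kap * E)
      + 4 * (lam * (sqrt r * sqrt 2 * E))"
    using stationary rip noise mult_left_mono[OF F2, of "1 + del"] mult_left_mono[OF F nonneg(4)]
      mult_left_mono[OF T nonneg(5)] mult_left_mono[OF trace(2) nonneg(5)] del by linarith
  then have "(1 - 5 * del) * E\<^sup>2 \<le> (2 * sqrt 2 * kap + 4 * kap + 4 * sqrt 2 * (lam * sqrt r)) * E"
    by (simp add: algebra_simps power2_eq_square)
  also have "\<dots> \<le> (2 * (3/2) * kap + 4 * kap + 4 * (3/2) * (lam * sqrt r)) * E"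
    using sqrt2 nonneg by (intro mult_right_mono add_mono mult_left_mono mult_right_mono) auto
  finally have "(1/2) * (E * E) \<le> (7 * kap + 6 * (lam * sqrt r)) * E"
    using mult_right_mono[of "1/2" "1 - 5 * del" "E\<^sup>2"] del by (simp add: power2_eq_square algebra_simps)
  then have "E * E \<le> (14 * kap + 12 * (lam * sqrt r)) * E" by (simp add: algebra_simps)
  then show ?thesis using nonneg by (cases "E = 0") (auto simp: mult_le_cancel_right)
qed

lemma landscape_error_bound:
  fixes U Y0 M :: "real mat"
  assumes Xc: "\<forall>i<n. X i \<in> carrier_mat d d"
    and sos: "second_order_stationary (f_obj n X eps M lam) d r U"
    and Y0: "Y0 \<in> carrier_mat d r" and Y0M: "Y0 * transpose_mat Y0 = M"
    and good: "good_event d n r sigma delta Cev X eps"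
    and n: "n > 0" and delta: "0 \<le> delta" "delta \<le> 1/10"
    and nonneg: "lam \<ge> 0" "sigma \<ge> 0" "Cev \<ge> 0"
  shows "frob_norm (U * transpose_mat U - M) \<le> 14 * (Cev * sigma * sqrt (real d * real r)) + 12 * lam * sqrt (real r)"
proof -
  have U: "U \<in> carrier_mat d r" using sos unfolding second_order_stationary_def by auto
  obtain Y where Y: "Y \<in> carrier_mat d r" and YM: "Y * transpose_mat Y = M"
    and best: "\<forall>Y' \<in> carrier_mat d r. Y' * transpose_mat Y' = M \<longrightarrow> frob_inner U Y' \<le> frob_inner U Y"
    using exists_best_aligned_factor[OF U Y0 Y0M] by blast
  interpret aligned: trace_maximal r "\<lambda>a b. \<Sum>i<d. U $$ (i,a) * Y $$ (i,b)"
    by (rule best_aligned_factor_trace_maximal[OF U Y YM best])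
  define D where "D = U - Y"
  have Dc: "D \<in> carrier_mat d r" unfolding D_def using U Y by auto
  have rip: "(1 - delta) * (frob_norm A)\<^sup>2 \<le> meas_sqnorm n X A \<and> meas_sqnorm n X A \<le> (1 + delta) * (frob_norm A)\<^sup>2"
    if "A \<in> carrier_mat d d" "symmetric_mat A" "mat_rank A \<le> 2 * r" for A
    using good that unfolding good_event_def by blast
  have err: "U * transpose_mat U - M \<in> carrier_mat d d" "symmetric_mat (U * transpose_mat U - M)"
      "mat_rank (U * transpose_mat U - M) \<le> 2 * r"
    using U Y gram_diff_symmetric[OF U Y] gram_diff_rank[OF U Y] by (auto simp: YM[symmetric])
  have gramD: "D * transpose_mat D \<in> carrier_mat d d" "symmetric_mat (D * transpose_mat D)"
      "mat_rank (D * transpose_mat D) \<le> 2 * r"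
    using Dc gram_symmetric[OF Dc] gram_rank[OF Dc] by auto
  define A where "A a b = (\<Sum>i<d. U $$ (i,a) * U $$ (i,b))" for a b
  define B where "B a b = (\<Sum>i<d. Y $$ (i,a) * Y $$ (i,b))" for a b
  have "frob_norm (U * transpose_mat U - M)
      \<le> 14 * (Cev * sigma * sqrt (real d * real r)) + 12 * lam * sqrt (real r)"
  proof (rule error_bound_from_landscape_inequalities)
    show "3 * meas_sqnorm n X (U * transpose_mat U - M)
      \<le> meas_sqnorm n X (D * transpose_mat D) + 2 * (\<Sum>i<n. eps i * meas n X (D * transpose_mat D) i)
        + 4 * (\<Sum>i<n. eps i * meas n X (U * transpose_mat U - M) i)
        + 2 * lam * (frob_inner D D - 4 * frob_inner U D)"
      unfolding D_def by (rule stationary_difference_inequality[OF Xc sos Y YM])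
    show "(frob_norm (D * transpose_mat D))\<^sup>2 + (\<Sum>a<r. \<Sum>b<r. (A a b - B a b)\<^sup>2)
        \<le> 2 * (frob_norm (U * transpose_mat U - M))\<^sup>2"
      using aligned.aligned_gram_diff_bound[OF U Y refl] unfolding frob_norm_square D_def A_def B_def YM .
    show "frob_inner D D - 4 * frob_inner U D \<le> 2 * (\<Sum>a<r. B a a - A a a)"
      using frob_diff_minus_inner_le[OF U Y] unfolding D_def A_def B_def by (simp add: sum_subtractf)
  qed (use rip[OF err] rip[OF gramD] good_event_noise_bound[OF good n err] good_event_noise_bound[OF good n gramD]
         sum_diag_diff_square_le delta nonneg in \<open>auto simp: frob_norm_def frob_inner_self_nonneg intro!: sum_nonneg\<close>)
  then show ?thesis .
qed

lemma low_rank_gram_factor: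
  fixes V Lam :: "real mat"
  assumes V: "V \<in> carrier_mat d r" and L: "Lam \<in> carrier_mat r r" and dg: "diagonal_mat Lam"
    and pos: "\<forall>i<r. Lam $$ (i,i) > 0"
  shows "\<exists>Y0 \<in> carrier_mat d r. Y0 * transpose_mat Y0 = sqrt (real d) \<cdot>\<^sub>m (V * Lam * transpose_mat V)"
proof -
  define c where "c = sqrt (sqrt (real d))"
  define Y0 where "Y0 = mat d r (\<lambda>(i,k). c * V $$ (i,k) * sqrt (Lam $$ (k,k)))"
  have Y0c: "Y0 \<in> carrier_mat d r" unfolding Y0_def by simp
  have VL: "(V * Lam) $$ (i,k) = V $$ (i,k) * Lam $$ (k,k)" if "i < d" "k < r" for i k
  proof -
    have "(V * Lam) $$ (i,k) = (\<Sum>m<r. V $$ (i,m) * Lam $$ (m,k))" by (rule index_mult_mat_sum[OF V L that])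
    also have "\<dots> = (\<Sum>m<r. if m = k then V $$ (i,k) * Lam $$ (k,k) else 0)"
      by (intro sum.cong refl) (use dg L that in \<open>auto simp: diagonal_mat_def\<close>)
    also have "\<dots> = V $$ (i,k) * Lam $$ (k,k)" using that by simp
    finally show ?thesis .
  qed
  have VLc: "V * Lam \<in> carrier_mat d r" using V L by auto
  have "Y0 * transpose_mat Y0 = sqrt (real d) \<cdot>\<^sub>m (V * Lam * transpose_mat V)"
  proof (rule eq_matI)
    fix i j assume "i < dim_row (sqrt (real d) \<cdot>\<^sub>m (V * Lam * transpose_mat V))" "j < dim_col (sqrt (real d) \<cdot>\<^sub>m (V * Lam * transpose_mat V))"
    then have ij: "i < d" "j < d" using V L by auto
    have "(Y0 * transpose_mat Y0) $$ (i,j) = (\<Sum>k<r. Y0 $$ (i,k) * Y0 $$ (j,k))" by (rule index_mult_transpose_sum[OF Y0c Y0c ij])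
    also have "\<dots> = (\<Sum>k<r. sqrt (real d) * (V $$ (i,k) * Lam $$ (k,k) * V $$ (j,k)))"
    proof (intro sum.cong refl)
      fix k assume "k \<in> {..<r}"
      then have k: "k < r" by simp
      have "c * c = sqrt (real d)" unfolding c_def by simp
      moreover have "sqrt (Lam $$ (k,k)) * sqrt (Lam $$ (k,k)) = Lam $$ (k,k)" using pos k by (simp add: less_imp_le)
      ultimately show "Y0 $$ (i,k) * Y0 $$ (j,k) = sqrt (real d) * (V $$ (i,k) * Lam $$ (k,k) * V $$ (j,k))"
        unfolding Y0_def using ij k by (simp add: algebra_simps)
    qed
    also have "\<dots> = sqrt (real d) * (V * Lam * transpose_mat V) $$ (i,j)"
      unfolding index_mult_transpose_sum[OF VLc V ij] sum_distrib_left by (intro sum.cong refl) (simp add: VL ij)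
    also have "\<dots> = (sqrt (real d) \<cdot>\<^sub>m (V * Lam * transpose_mat V)) $$ (i,j)" using ij V L by simp
    finally show "(Y0 * transpose_mat Y0) $$ (i,j) = (sqrt (real d) \<cdot>\<^sub>m (V * Lam * transpose_mat V)) $$ (i,j)" .
  qed (use V L Y0c in auto)
  then show ?thesis using Y0c by blast
qed

lemma error_scale_below_threshold:
  fixes K c0 C4 sigma lam :: real and d r :: nat
  assumes K: "K > 0" and c0: "0 < c0" "c0 \<le> C4 / (4 * K)" and sigma: "sigma > 0" and dr: "d > 0" "r > 0"
    and lam: "C4 * sqrt (real d) * sigma \<le> lam"
  shows "K * (sigma * sqrt (real d * real r)) < lam / (2 * (c0 / sqrt (real r)))"
proof -
  have "4 * (K * c0) \<le> C4" using c0 K by (simp add: le_divide_eq algebra_simps)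
  moreover have "K * c0 > 0" using K c0 by simp
  ultimately have "2 * (K * c0) < C4" by linarith
  then have "K < C4 / (2 * c0)" using c0 by (simp add: less_divide_eq algebra_simps)
  then have "K * (sigma * sqrt (real d * real r)) < C4 / (2 * c0) * (sigma * sqrt (real d * real r))"
    using sigma dr by (intro mult_strict_right_mono) auto
  also have "\<dots> = C4 * sqrt (real d) * sigma * sqrt (real r) / (2 * c0)"
    by (simp add: real_sqrt_mult field_simps)
  also have "\<dots> \<le> lam * sqrt (real r) / (2 * c0)"
    using lam c0 by (intro divide_right_mono mult_right_mono) auto
  also have "\<dots> = lam / (2 * (c0 / sqrt (real r)))"
    using dr by (simp add: field_simps)
  finally show ?thesis .
qed

lemma estimator_error_bound:
  fixes U V Lam :: "real mat" and C4 C5 Cev c0 :: real and d :: nat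
  defines "M \<equiv> sqrt (real d) \<cdot>\<^sub>m (V * Lam * transpose_mat V)"
  assumes sos: "second_order_stationary (f_obj n X eps M lam) d r U"
    and good: "good_event d n r sigma (c0 / sqrt (real r)) Cev X eps"
    and lam: "C4 * sqrt (real d) \<le> lam / sigma" "lam / sigma \<le> C5 * sqrt (real d)"
    and c0: "0 < c0" "c0 \<le> min (1/10) (C4 / (4 * (14 * Cev + 12 * C5)))"
    and V: "V \<in> carrier_mat d r" and Lam: "Lam \<in> carrier_mat r r" "diagonal_mat Lam" "\<forall>i<r. Lam $$ (i,i) > 0"
    and Xc: "\<forall>i<n. X i \<in> carrier_mat d d"
    and dnr: "d > 0" "n > 0" "r > 0" and sigma: "sigma > 0" and Cev: "Cev > 0"
    and C45: "C4 > 0" "C5 > 0"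
  shows "frob_norm (U * transpose_mat U - M) / sqrt (real d * real r) \<le> (14 * Cev + 12 * C5) * sigma
    \<and> frob_norm (U * transpose_mat U - M) < lam / (2 * (c0 / sqrt (real r)))"
proof -
  obtain Y0 where Y0: "Y0 \<in> carrier_mat d r" "Y0 * transpose_mat Y0 = M"
    using low_rank_gram_factor[OF V Lam] unfolding M_def by blast
  define K where "K = 14 * Cev + 12 * C5"
  define E where "E = frob_norm (U * transpose_mat U - M)"
  have K: "K > 0" unfolding K_def using Cev C45 by simp
  have sqrt_dr: "sqrt (real d * real r) = sqrt (real d) * sqrt (real r)" "sqrt (real d * real r) > 0"
    using dnr by (simp_all add: real_sqrt_mult)
  have sqrt_r: "sqrt (real r) \<ge> 1" using dnr by simp
  have lam_lo: "C4 * sqrt (real d) * sigma \<le> lam" and lam_hi: "lam \<le> C5 * sqrt (real d) * sigma"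
    using lam sigma by (simp_all add: pos_le_divide_eq pos_divide_le_eq)
  have "c0 / sqrt (real r) \<le> c0" using c0 sqrt_r by (simp add: divide_le_eq)
  moreover have "c0 \<le> 1/10" using c0(2) by simp
  ultimately have delta: "0 \<le> c0 / sqrt (real r)" "c0 / sqrt (real r) \<le> 1/10"
    using c0(1) by (simp, linarith)
  have "0 \<le> C4 * sqrt (real d) * sigma" using C45 sigma by simp
  then have "0 \<le> lam" using lam_lo by linarith
  then have "E \<le> 14 * (Cev * sigma * sqrt (real d * real r)) + 12 * lam * sqrt (real r)"
    unfolding E_def using sigma Cev
    by (intro landscape_error_bound[OF Xc sos Y0 good dnr(2) delta]) auto
  also have "12 * lam * sqrt (real r) \<le> 12 * (C5 * sqrt (real d) * sigma) * sqrt (real r)"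
    using lam_hi by (intro mult_right_mono) auto
  finally have EK: "E \<le> K * (sigma * sqrt (real d * real r))"
    unfolding K_def sqrt_dr(1) by (simp add: algebra_simps)
  then have "E / sqrt (real d * real r) \<le> K * sigma"
    using sqrt_dr(2) by (simp add: divide_le_eq algebra_simps)
  moreover have "K * (sigma * sqrt (real d * real r)) < lam / (2 * (c0 / sqrt (real r)))"
    using error_scale_below_threshold[OF K c0(1) _ sigma dnr(1,3) lam_lo] c0(2) by (simp add: K_def)
  ultimately show ?thesis using EK unfolding E_def K_def by linarith
qed

theorem lemma3:
  fixes kappa cmin C4 C5 Cev :: real
  assumes "kappa > 0" and "cmin > 0" and "C4 > 0" and "C5 > 0" and "Cev > 0"
  shows "\<exists>C1 C3 c0bar :: real. C1 > 0 \<and> C3 > 0 \<and> c0bar > 0 \<and>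
    (\<forall>C2 c0 :: real. 0 < c0 \<and> c0 \<le> c0bar \<longrightarrow>
      (\<exists>C :: real. C > 0 \<and>
        (\<forall>(d::nat) (n::nat) (r::nat) (sigma::real) (lam::real) (V::real mat) (Lam::real mat)
            (X::nat \<Rightarrow> real mat) (eps::nat \<Rightarrow> real) (U::real mat).
          let M = sqrt (real d) \<cdot>\<^sub>m (V * Lam * transpose_mat V);
              lam_r = Min {Lam $$ (i,i) | i. i < r};
              delta = c0 / sqrt (real r)
          in
          d > 0 \<and> n > 0 \<and> r > 0 \<and>
          \<comment> \<open>Assumption 1\<close>
          V \<in> carrier_mat d r \<and> transpose_mat V * V = 1\<^sub>m r \<and>
          Lam \<in> carrier_mat r r \<and> diagonal_mat Lam \<and> (\<forall>i<r. Lam $$ (i,i) > 0) \<and>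
          C1 * sqrt (real r) < lam_r / sigma \<and> lam_r / sigma < C2 * sqrt (real r) \<and>
          spec_norm M / (lam_r * sqrt (real d)) \<le> kappa \<and>
          sigma \<ge> cmin \<and>
          \<comment> \<open>Assumption 2\<close>
          real n / (real d * real r) \<ge> C3 * real r \<and>
          \<comment> \<open>Assumption 3\<close>
          C4 * sqrt (real d) \<le> lam / sigma \<and> lam / sigma \<le> C5 * sqrt (real d) \<and>
          \<comment> \<open>design: symmetric d x d sensing matrices\<close>
          (\<forall>i<n. X i \<in> carrier_mat d d \<and> symmetric_mat (X i)) \<and>
          \<comment> \<open>on the event E_Good\<close>
          good_event d n r sigma delta Cev X eps \<and>
          \<comment> \<open>U satisfies first- and second-order necessary conditions\<close>
          second_order_stationary (f_obj n X eps M lam) d r U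
          \<longrightarrow>
          frob_norm (U * transpose_mat U - M) / sqrt (real d * real r) \<le> C * sigma \<and>
          frob_norm (U * transpose_mat U - M) < lam / (2 * delta))))"
proof -
  have c0bar: "min (1/10) (C4 / (4 * (14 * Cev + 12 * C5))) > 0" and K: "14 * Cev + 12 * C5 > 0"
    using assms by simp_all
  show ?thesis
    unfolding Let_def
    apply (rule exI[of _ 1], rule exI[of _ 1], rule exI[of _ "min (1/10) (C4 / (4 * (14 * Cev + 12 * C5)))"])
    apply (intro conjI allI impI exI[of _ "14 * Cev + 12 * C5"] c0bar K, simp, simp)
    subgoal by (insert assms, elim conjE, rule estimator_error_bound[THEN conjunct1]) (assumption | linarith | blast)+
    subgoal by (insert assms, elim conjE, rule estimator_error_bound[THEN conjunct2]) (assumption | linarith | blast)+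
    done
qed

end
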